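(* For $n\in\{3,4\}$ there is no u-p-word for $n$-permutations of the form $u=u_1\Diamond u_3u_4\cdots u_N$ containing exactly one $\Diamond$ (that is, with $u_1,u_3,\ldots,u_N$ all integers).
   Context: An $n$-permutation is a permutation of $\{1,\ldots,n\}$. For a word $w$ of distinct numbers, $\mathrm{red}(w)$ is obtained by replacing the $i$-th smallest letter by $i$. Let $\Diamond$ be a symbol not among the integers. A word $f=f_1\cdots f_n$ over the positive integers together with $\Diamond$, whose integer letters are pairwise distinct, covers an $n$-permutation $\pi$ if one can substitute real numbers for the occurrences of $\Diamond$ (independently) so that the resulting word has $n$ pairwise distinct entries and reduces to $\pi$; equivalently, $f_i<f_j\iff\pi_i<\pi_j$ for all positions $i,j$ holding integers. A u-p-word for $n$-permutations is a word $u_1\cdots u_N$, $N\geq n$, over this alphabet containing at least one $\Diamond$, such that every factor $u_i\cdots u_{i+n-1}$ ($1\leq i\leq N-n+1$) has pairwise distinct integer letters and every $n$-permutation is covered by exactly one of these factors. *)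

theory Defs
  imports Main
begin

type_synonym letter = "nat option"

abbreviation Diamond :: letter where "Diamond \<equiv> None"

definition perms :: "nat \<Rightarrow> nat list set" where
  "perms n = {p. length p = n \<and> distinct p \<and> set p = {1..n}}"

definition int_distinct :: "letter list \<Rightarrow> bool" where
  "int_distinct f \<longleftrightarrow> (\<forall>i j a b. i < length f \<and> j < length f \<and> i \<noteq> j \<and>
      f ! i = Some a \<and> f ! j = Some b \<longrightarrow> a \<noteq> b)"

text \<open>f covers the n-permutation p (the equivalent order-pattern formulation).\<close>
definition covers :: "letter list \<Rightarrow> nat list \<Rightarrow> bool" where
  "covers f p \<longleftrightarrow> length f = length p \<and> int_distinct f \<and>
     (\<forall>i j a b. i < length f \<and> j < length f \<and> f ! i = Some a \<and> f ! j = Some b \<longrightarrow>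
        (a < b \<longleftrightarrow> p ! i < p ! j))"

text \<open>The factor u_{i+1} ... u_{i+n} (0-based start index i).\<close>
definition factor :: "letter list \<Rightarrow> nat \<Rightarrow> nat \<Rightarrow> letter list" where
  "factor u n i = take n (drop i u)"

definition up_word :: "nat \<Rightarrow> letter list \<Rightarrow> bool" where
  "up_word n u \<longleftrightarrow> length u \<ge> n \<and> Diamond \<in> set u \<and>
     (\<forall>k. Some k \<in> set u \<longrightarrow> k > 0) \<and>
     (\<forall>i. i + n \<le> length u \<longrightarrow> int_distinct (factor u n i)) \<and>
     (\<forall>p \<in> perms n. \<exists>!i. i + n \<le> length u \<and> covers (factor u n i) p)"

end

theory Submission
  imports Defs
begin

(*
  Write u = a <> b c d ... with the diamond <> in the second position. Every factor that starts at
  the third letter or later consists of integers only and so covers exactly one permutation, its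
  reduction. If u has just n letters, its only factor would have to cover both the identity and its
  reversal, which order the first and third positions oppositely. Otherwise call a permutation
  avoiding if it is covered by neither of the first two factors F0 = a <> b ... and F1 = <> b c ...
  while its first n - 1 entries are ordered like b c .... An avoiding permutation is covered by F2:
  were it covered by a factor F_i with i >= 3, the permutation covered by the integer factor
  F_(i-1) would also be covered by F1. So there is at most one avoiding permutation. For n = 3 the
  order constraints of F0 and F1 are always compatible, so some permutation is covered twice. For
  n = 4 the same happens when b, c, d are monotone; otherwise c is extremal among b, c, d, and the
  relative order of a, b, c, d yields two distinct avoiding permutations.
*)

lemma int_distinctI:
  "(\<And>i j a. i < length f \<Longrightarrow> j < length f \<Longrightarrow> f ! i = Some a \<Longrightarrow> f ! j = Some a \<Longrightarrow> i = j)
   \<Longrightarrow> int_distinct f"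
  unfolding int_distinct_def by blast

lemma int_distinctD:
  "int_distinct f \<Longrightarrow> i < length f \<Longrightarrow> j < length f \<Longrightarrow> f ! i = Some a \<Longrightarrow> f ! j = Some a \<Longrightarrow> i = j"
  unfolding int_distinct_def by blast

lemma int_distinct_take:
  assumes "int_distinct f"
  shows "int_distinct (take k f)"
proof (rule int_distinctI)
  fix i j a
  assume "i < length (take k f)" "j < length (take k f)" "take k f ! i = Some a" "take k f ! j = Some a"
  then show "i = j" using int_distinctD[OF assms, of i j a] by simp
qed

lemma int_distinct_Cons:
  "int_distinct (x # f) \<longleftrightarrow> int_distinct f \<and> (\<forall>a. x = Some a \<longrightarrow> Some a \<notin> set f)"
proof (intro iffI conjI allI impI)
  assume d: "int_distinct (x # f)"
  show "int_distinct f"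
  proof (rule int_distinctI)
    fix i j a
    assume "i < length f" "j < length f" "f ! i = Some a" "f ! j = Some a"
    then show "i = j" using int_distinctD[OF d, of "Suc i" "Suc j" a] by simp
  qed
  fix a assume "x = Some a"
  show "Some a \<notin> set f"
  proof
    assume "Some a \<in> set f"
    then obtain j where "j < length f" "f ! j = Some a" by (auto simp: in_set_conv_nth)
    then show False using int_distinctD[OF d, of 0 "Suc j" a] \<open>x = Some a\<close> by simp
  qed
next
  assume d: "int_distinct f \<and> (\<forall>a. x = Some a \<longrightarrow> Some a \<notin> set f)"
  show "int_distinct (x # f)"
  proof (rule int_distinctI)
    fix i j a
    assume ij: "i < length (x # f)" "j < length (x # f)" "(x # f) ! i = Some a" "(x # f) ! j = Some a"
    show "i = j"
    proof (cases i; cases j)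
      fix i' j' assume "i = Suc i'" "j = Suc j'"
      then show ?thesis using ij int_distinctD[of f i' j' a] d by simp
    qed (use d ij in \<open>auto simp: in_set_conv_nth\<close>)
  qed
qed

lemma covers_iff:
  "covers f p \<longleftrightarrow> length f = length p \<and> int_distinct f \<and>
     (\<forall>i<length f. \<forall>j<length f. \<forall>a b. f ! i = Some a \<longrightarrow> f ! j = Some b \<longrightarrow> (a < b \<longleftrightarrow> p ! i < p ! j))"
  unfolding covers_def by blast

lemma covers_length: "covers f p \<Longrightarrow> length p = length f"
  by (simp add: covers_def)

lemma covers_nth_less_iff:
  "covers f p \<Longrightarrow> i < length f \<Longrightarrow> j < length f \<Longrightarrow> f ! i = Some a \<Longrightarrow> f ! j = Some b
   \<Longrightarrow> a < b \<longleftrightarrow> p ! i < p ! j"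
  unfolding covers_def by blast

lemma covers_Nil [simp]: "covers [] p \<longleftrightarrow> p = []"
  by (simp add: covers_iff int_distinct_def)

lemma covers_Diamond_Cons [simp]: "covers (Diamond # f) (x # p) \<longleftrightarrow> covers f p"
  unfolding covers_iff int_distinct_Cons by (simp add: All_less_Suc2)

(* In this form simp decides covers for concrete words. *)
lemma covers_Some_Cons [simp]:
  "covers (Some a # f) (x # p) \<longleftrightarrow> covers f p \<and> Some a \<notin> set f \<and>
     list_all2 (\<lambda>c y. \<forall>b. c = Some b \<longrightarrow> (a < b \<longleftrightarrow> x < y) \<and> (b < a \<longleftrightarrow> y < x)) f p"
  unfolding covers_iff int_distinct_Cons list_all2_conv_all_nth
  by (simp add: All_less_Suc2) blast

lemma covers_take:
  assumes "covers f p"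
  shows "covers (take k f) (take k p)"
  unfolding covers_iff
proof (intro conjI allI impI)
  show "length (take k f) = length (take k p)" "int_distinct (take k f)"
    using assms by (simp_all add: covers_iff int_distinct_take)
  fix i j a b
  assume "i < length (take k f)" "j < length (take k f)" "take k f ! i = Some a" "take k f ! j = Some b"
  then show "a < b \<longleftrightarrow> take k p ! i < take k p ! j"
    using assms unfolding covers_iff by simp
qed

definition same_pattern :: "nat list \<Rightarrow> nat list \<Rightarrow> bool" where
  "same_pattern p q \<longleftrightarrow> length p = length q \<and>
     (\<forall>i<length p. \<forall>j<length p. p ! i < p ! j \<longleftrightarrow> q ! i < q ! j)"

lemma covers_same_pattern:
  assumes "covers f p" "same_pattern p q"
  shows "covers f q"
  unfolding covers_iff
proof (intro conjI allI impI)
  show "length f = length q" "int_distinct f"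
    using assms covers_length unfolding same_pattern_def covers_def by metis+
  fix i j a b
  assume ij: "i < length f" "j < length f" "f ! i = Some a" "f ! j = Some b"
  then have "a < b \<longleftrightarrow> p ! i < p ! j" using covers_nth_less_iff[OF assms(1)] by blast
  also have "\<dots> \<longleftrightarrow> q ! i < q ! j"
    using assms ij(1,2) covers_length unfolding same_pattern_def by metis
  finally show "a < b \<longleftrightarrow> q ! i < q ! j" .
qed

lemma same_pattern_if_covers:
  assumes "Diamond \<notin> set f" "covers f p" "covers f q"
  shows "same_pattern p q"
  unfolding same_pattern_def
proof (intro conjI allI impI)
  show "length p = length q" using assms by (simp add: covers_length)
  fix i j assume ij: "i < length p" "j < length p"
  then have "i < length f" "j < length f" using assms(2) by (simp_all add: covers_length)
  moreover obtain a b where "f ! i = Some a" "f ! j = Some b"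
    using assms(1) calculation by (metis nth_mem option.exhaust)
  ultimately show "p ! i < p ! j \<longleftrightarrow> q ! i < q ! j"
    using covers_nth_less_iff[OF assms(2)] covers_nth_less_iff[OF assms(3)] by blast
qed

lemma card_perm_le_entry:
  assumes "p \<in> perms n" "i < n"
  shows "card {j. j < n \<and> p ! j \<le> p ! i} = p ! i"
proof -
  have p: "length p = n" "distinct p" "set p = {1..n}" using assms(1) by (auto simp: perms_def)
  have "(!) p ` {j. j < n \<and> p ! j \<le> p ! i} = {1..p ! i}"
  proof
    show "(!) p ` {j. j < n \<and> p ! j \<le> p ! i} \<subseteq> {1..p ! i}"
    proof
      fix k assume "k \<in> (!) p ` {j. j < n \<and> p ! j \<le> p ! i}"
      then obtain j where j: "j < n" "p ! j \<le> p ! i" "k = p ! j" by blast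
      then have "k \<in> set p" using p(1) by simp
      with j show "k \<in> {1..p ! i}" using p(3) by simp
    qed
    show "{1..p ! i} \<subseteq> (!) p ` {j. j < n \<and> p ! j \<le> p ! i}"
    proof
      fix k assume k: "k \<in> {1..p ! i}"
      have "p ! i \<in> set p" using assms(2) p(1) by simp
      with k have "k \<in> set p" using p(3) by simp
      then obtain j where "j < n" "k = p ! j" using p(1) by (auto simp: in_set_conv_nth)
      with k show "k \<in> (!) p ` {j. j < n \<and> p ! j \<le> p ! i}" by simp
    qed
  qed
  moreover have "inj_on ((!) p) {j. j < n \<and> p ! j \<le> p ! i}"
    using p(1,2) by (simp add: inj_on_def nth_eq_iff_index_eq)
  ultimately show ?thesis by (metis card_atLeastAtMost card_image diff_Suc_1)
qed

lemma perms_eq_if_same_pattern: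
  assumes "p \<in> perms n" "q \<in> perms n" "same_pattern p q"
  shows "p = q"
proof (rule nth_equalityI)
  have "length p = n" "length q = n" using assms(1,2) by (simp_all add: perms_def)
  then show "length p = length q" by simp
  fix i assume "i < length p"
  with \<open>length p = n\<close> have "i < n" by simp
  have "p ! j \<le> p ! i \<longleftrightarrow> q ! j \<le> q ! i" if "j < n" for j
    using assms(3) \<open>i < n\<close> that \<open>length p = n\<close> unfolding same_pattern_def not_less[symmetric] by blast
  then have "{j. j < n \<and> p ! j \<le> p ! i} = {j. j < n \<and> q ! j \<le> q ! i}" by blast
  then show "p ! i = q ! i"
    using card_perm_le_entry[OF assms(1) \<open>i < n\<close>] card_perm_le_entry[OF assms(2) \<open>i < n\<close>] by simp
qed

lemma int_distinct_map_Some: "int_distinct (map Some xs) \<longleftrightarrow> distinct xs"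
proof -
  have "map Some xs ! i = Some a \<longleftrightarrow> xs ! i = a" if "i < length xs" for i a
    using that by simp
  then show ?thesis
    unfolding int_distinct_def distinct_conv_nth length_map by metis
qed

definition red :: "nat list \<Rightarrow> nat list" where
  "red xs = map (\<lambda>x. card {y \<in> set xs. y \<le> x}) xs"

lemma card_le_less_iff:
  fixes A :: "'a::linorder set"
  assumes "finite A" "y \<in> A"
  shows "card {z \<in> A. z \<le> x} < card {z \<in> A. z \<le> y} \<longleftrightarrow> x < y"
proof
  assume "x < y"
  then have "{z \<in> A. z \<le> x} \<subseteq> {z \<in> A. z \<le> y}" and "y \<in> {z \<in> A. z \<le> y} - {z \<in> A. z \<le> x}"
    using assms(2) by auto
  then have "{z \<in> A. z \<le> x} \<subset> {z \<in> A. z \<le> y}" by blast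
  with assms(1) show "card {z \<in> A. z \<le> x} < card {z \<in> A. z \<le> y}" by (simp add: psubset_card_mono)
next
  assume "card {z \<in> A. z \<le> x} < card {z \<in> A. z \<le> y}"
  moreover have "y \<le> x \<Longrightarrow> card {z \<in> A. z \<le> y} \<le> card {z \<in> A. z \<le> x}"
    using assms(1) by (auto intro: card_mono)
  ultimately show "x < y" by (meson leD linorder_le_less_linear)
qed

lemma red_nth_less_iff:
  "i < length xs \<Longrightarrow> j < length xs \<Longrightarrow> red xs ! i < red xs ! j \<longleftrightarrow> xs ! i < xs ! j"
  by (simp add: red_def card_le_less_iff)

lemma red_in_perms:
  assumes "distinct xs"
  shows "red xs \<in> perms (length xs)"
proof -
  have "inj_on (\<lambda>x. card {y \<in> set xs. y \<le> x}) (set xs)"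
  proof (rule inj_onI)
    fix x y assume "x \<in> set xs" "y \<in> set xs" "card {z \<in> set xs. z \<le> x} = card {z \<in> set xs. z \<le> y}"
    then show "x = y" using card_le_less_iff[of "set xs"] by (metis finite_set linorder_neqE_nat less_irrefl)
  qed
  with assms have "distinct (red xs)" by (simp add: red_def distinct_map)
  have "set (red xs) \<subseteq> {1..length xs}"
  proof
    fix k assume "k \<in> set (red xs)"
    then obtain x where x: "x \<in> set xs" "k = card {y \<in> set xs. y \<le> x}" by (auto simp: red_def)
    then have "1 \<le> k" by (auto simp: Suc_le_eq card_gt_0_iff)
    moreover have "k \<le> card (set xs)" unfolding x by (rule card_mono) auto
    ultimately show "k \<in> {1..length xs}" using card_length[of xs] by simp
  qed
  moreover have "card (set (red xs)) = card {1..length xs}"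
    using distinct_card[OF \<open>distinct (red xs)\<close>] by (simp add: red_def)
  ultimately have "set (red xs) = {1..length xs}" by (simp add: card_subset_eq)
  with \<open>distinct (red xs)\<close> show ?thesis by (simp add: perms_def red_def)
qed

lemma ex_perm_covers:
  assumes "Diamond \<notin> set f" "int_distinct f"
  shows "\<exists>p \<in> perms (length f). covers f p"
proof
  define xs where "xs = map the f"
  have f: "f = map Some xs" using assms(1) unfolding xs_def by (induction f) auto
  show "red xs \<in> perms (length f)"
    using red_in_perms assms(2) unfolding f int_distinct_map_Some by simp
  show "covers f (red xs)"
    unfolding covers_iff
  proof (intro conjI allI impI)
    show "length f = length (red xs)" "int_distinct f" using assms(2) by (simp_all add: f red_def)
    fix i j a b
    assume "i < length f" "j < length f" "f ! i = Some a" "f ! j = Some b"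
    then show "a < b \<longleftrightarrow> red xs ! i < red xs ! j" by (simp add: f red_nth_less_iff)
  qed
qed

lemma length_factor: "i + n \<le> length u \<Longrightarrow> length (factor u n i) = n"
  by (simp add: factor_def)

lemma factor_0 [simp]: "factor u 0 i = []"
  by (simp add: factor_def)

lemma take_factor: "m \<le> n \<Longrightarrow> take m (factor u n i) = factor u m i"
  by (simp add: factor_def min_absorb1)

lemma factor_Suc: "Suc i \<le> length u \<Longrightarrow> factor u (Suc n) i = u ! i # factor u n (Suc i)"
  unfolding factor_def by (subst Cons_nth_drop_Suc[symmetric]) simp_all

lemma set_factor_subset: "set (factor u n i) \<subseteq> (!) u ` {i..<length u}"
proof
  fix x assume "x \<in> set (factor u n i)"
  then have "x \<in> set (drop i u)" unfolding factor_def by (rule in_set_takeD)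
  then obtain k where "k < length u - i" "x = u ! (i + k)" by (auto simp: in_set_conv_nth)
  then show "x \<in> (!) u ` {i..<length u}" by (intro image_eqI[of _ _ "i + k"]) auto
qed

(* Positions are 0-based: u ! 1 is the letter u_2 of the paper. *)
locale Diamond_second_letter =
  fixes n :: nat and u :: "letter list"
  assumes up_word: "up_word n u"
    and two_le_n: "2 \<le> n"
    and Diamond_at_1: "u ! 1 = Diamond"
    and integer_elsewhere: "\<And>i. i < length u \<Longrightarrow> i \<noteq> 1 \<Longrightarrow> u ! i \<noteq> Diamond"
begin

lemma n_le_length: "n \<le> length u"
  using up_word by (simp add: up_word_def)

lemma factor_int_distinct: "i + n \<le> length u \<Longrightarrow> int_distinct (factor u n i)"
  using up_word by (simp add: up_word_def)

lemma ex1_covering_factor: "p \<in> perms n \<Longrightarrow> \<exists>!i. i + n \<le> length u \<and> covers (factor u n i) p"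
  using up_word by (simp add: up_word_def)

lemma covering_factor_unique:
  "p \<in> perms n \<Longrightarrow> i + n \<le> length u \<Longrightarrow> covers (factor u n i) p
   \<Longrightarrow> j + n \<le> length u \<Longrightarrow> covers (factor u n j) p \<Longrightarrow> i = j"
  using ex1_covering_factor by blast

lemma letter_Some: "i < length u \<Longrightarrow> i \<noteq> 1 \<Longrightarrow> \<exists>a. u ! i = Some a"
  using integer_elsewhere by blast

lemma Diamond_notin_factor: "2 \<le> i \<Longrightarrow> Diamond \<notin> set (factor u m i)"
  using set_factor_subset[of u m i] integer_elsewhere by fastforce

lemma factor_1: "1 \<le> m \<Longrightarrow> factor u m 1 = Diamond # factor u (m - 1) 2"
  using factor_Suc[of 1 u "m - 1"] n_le_length two_le_n Diamond_at_1 by (simp add: numeral_2_eq_2)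

lemma later_factor_shares_with_factor_1:
  assumes j: "2 \<le> j" "Suc j + n \<le> length u"
    and p: "covers (factor u n (Suc j)) p" "covers (factor u (n - 1) 2) (take (n - 1) p)"
  shows "\<exists>r \<in> perms n. covers (factor u n j) r \<and> covers (factor u n 1) r"
proof -
  have "Diamond \<notin> set (factor u n j)" "int_distinct (factor u n j)" "length (factor u n j) = n"
    using j by (simp_all add: Diamond_notin_factor factor_int_distinct length_factor)
  then obtain r where r: "r \<in> perms n" "covers (factor u n j) r"
    using ex_perm_covers by metis
  obtain x r' where "r = x # r'"
    using r(1) two_le_n by (cases r) (auto simp: perms_def)
  obtain c where "u ! j = Some c" using letter_Some j by fastforce
  have "factor u n j = Some c # factor u (n - 1) (Suc j)"
    using factor_Suc[of j u "n - 1"] \<open>u ! j = Some c\<close> j two_le_n by simp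
  with r(2) have "covers (factor u (n - 1) (Suc j)) r'" using \<open>r = x # r'\<close> by simp
  moreover have "covers (factor u (n - 1) (Suc j)) (take (n - 1) p)"
    using covers_take[OF p(1), of "n - 1"] by (simp add: take_factor)
  moreover have "Diamond \<notin> set (factor u (n - 1) (Suc j))"
    using j by (simp add: Diamond_notin_factor)
  ultimately have "same_pattern (take (n - 1) p) r'"
    using same_pattern_if_covers by blast
  with p(2) have "covers (factor u (n - 1) 2) r'" by (rule covers_same_pattern)
  moreover have "factor u n 1 = Diamond # factor u (n - 1) 2"
    using two_le_n by (intro factor_1) simp
  ultimately have "covers (factor u n 1) r" using \<open>r = x # r'\<close> by simp
  with r show ?thesis by blast
qed

lemma covered_by_factor_2:
  assumes p: "p \<in> perms n"
    and not_0: "\<not> covers (factor u n 0) p" and not_1: "\<not> covers (factor u n 1) p"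
    and prefix: "covers (factor u (n - 1) 2) (take (n - 1) p)"
  shows "covers (factor u n 2) p"
proof -
  obtain i where i: "i + n \<le> length u" "covers (factor u n i) p"
    using ex1_covering_factor[OF p] by blast
  have "i \<noteq> 0" "i \<noteq> 1" using i(2) not_0 not_1 by metis+
  moreover have "\<not> 2 < i"
  proof
    assume "2 < i"
    then obtain j where j: "i = Suc j" "2 \<le> j" by (cases i) auto
    then obtain r where r: "r \<in> perms n" "covers (factor u n j) r" "covers (factor u n 1) r"
      using later_factor_shares_with_factor_1[of j p] i prefix by blast
    then have "j = 1"
      using covering_factor_unique[OF r(1), of j 1] i(1) j two_le_n n_le_length by simp
    with j show False by simp
  qed
  ultimately have "i = 2" by simp
  with i show ?thesis by simp
qed

lemma at_most_one_avoids_first_factors: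
  assumes "p \<in> perms n" "\<not> covers (factor u n 0) p" "\<not> covers (factor u n 1) p"
    "covers (factor u (n - 1) 2) (take (n - 1) p)"
    and "q \<in> perms n" "\<not> covers (factor u n 0) q" "\<not> covers (factor u n 1) q"
    "covers (factor u (n - 1) 2) (take (n - 1) q)"
  shows "p = q"
proof -
  have "covers (factor u n 2) p" "covers (factor u n 2) q"
    using covered_by_factor_2 assms by blast+
  then have "same_pattern p q"
    using same_pattern_if_covers[OF Diamond_notin_factor[of 2 n]] by simp
  then show "p = q" by (rule perms_eq_if_same_pattern[OF assms(1,5)])
qed

lemma n_less_length:
  assumes "3 \<le> n"
  shows "n < length u"
proof (rule ccontr)
  assume "\<not> n < length u"
  with n_le_length have "length u = n" by simp
  then have covers_u: "covers u p" if "p \<in> perms n" for p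
    using ex1_covering_factor[OF that] by (auto simp: factor_def)
  have "0 < length u" "2 < length u" using assms \<open>length u = n\<close> by simp_all
  then obtain a b where "u ! 0 = Some a" "u ! 2 = Some b"
    using letter_Some[of 0] letter_Some[of 2] by auto
  define p where "p = [1..<n + 1]"
  have "p \<in> perms n" "rev p \<in> perms n" by (auto simp: perms_def p_def)
  then have "covers u p" "covers u (rev p)" by (simp_all add: covers_u)
  then have "a < b \<longleftrightarrow> p ! 0 < p ! 2" "a < b \<longleftrightarrow> rev p ! 0 < rev p ! 2"
    using covers_nth_less_iff[OF _ \<open>0 < length u\<close> \<open>2 < length u\<close> \<open>u ! 0 = Some a\<close> \<open>u ! 2 = Some b\<close>]
    by blast+
  moreover have "p ! 0 < p ! 2" "\<not> rev p ! 0 < rev p ! 2"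
    using assms by (simp_all add: p_def rev_nth del: upt_Suc)
  ultimately show False by simp
qed

lemma first_factors_disjoint:
  assumes "3 \<le> n" "p \<in> perms n" "covers (factor u n 0) p" "covers (factor u n 1) p"
  shows False
  using covering_factor_unique[of p 0 1] n_less_length assms by simp

lemma n_ne_3: "n \<noteq> 3"
proof
  assume n: "n = 3"
  with n_less_length have len: "4 \<le> length u" by simp
  obtain a b c where abc: "u ! 0 = Some a" "u ! 2 = Some b" "u ! 3 = Some c"
    using letter_Some[of 0] letter_Some[of 2] letter_Some[of 3] len by (cases u) auto
  have F0: "factor u 3 0 = [Some a, Diamond, Some b]"
    and F1: "factor u 3 1 = [Diamond, Some b, Some c]"
    using len abc Diamond_at_1 by (simp_all add: factor_Suc eval_nat_numeral)
  have "int_distinct (factor u 3 0)" "int_distinct (factor u 3 1)"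
    using factor_int_distinct[of 0] factor_int_distinct[of 1] len n by simp_all
  then have "a \<noteq> b" "b \<noteq> c" unfolding F0 F1 by (simp_all add: int_distinct_Cons)
  then have "\<exists>p \<in> set [[1, 2, 3], [1, 3, 2], [3, 1, 2], [3, 2, 1]].
      covers (factor u 3 0) p \<and> covers (factor u 3 1) p"
    unfolding F0 F1 by (cases "a < b"; cases "b < c") auto
  then obtain p where p: "p \<in> set [[1, 2, 3], [1, 3, 2], [3, 1, 2], [3, 2, 1]]"
    "covers (factor u 3 0) p" "covers (factor u 3 1) p" by blast
  from p(1) have "p \<in> perms 3" by (auto simp: perms_def atLeastAtMost_upt)
  with p(2,3) show False using first_factors_disjoint n by simp
qed

lemma first_factors_4:
  assumes "n = 4"
  obtains a b c d where
    "factor u 4 0 = [Some a, Diamond, Some b, Some c]"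
    "factor u 4 1 = [Diamond, Some b, Some c, Some d]"
    "factor u 3 2 = [Some b, Some c, Some d]"
    "a \<noteq> b" "a \<noteq> c" "b \<noteq> c" "b \<noteq> d" "c \<noteq> d"
proof -
  from assms n_less_length have len: "5 \<le> length u" by simp
  obtain a b c d where abcd: "u ! 0 = Some a" "u ! 2 = Some b" "u ! 3 = Some c" "u ! 4 = Some d"
    using letter_Some[of 0] letter_Some[of 2] letter_Some[of 3] letter_Some[of 4] len by (cases u) auto
  have F0: "factor u 4 0 = [Some a, Diamond, Some b, Some c]"
    and F1: "factor u 4 1 = [Diamond, Some b, Some c, Some d]"
    and "factor u 3 2 = [Some b, Some c, Some d]"
    using len abcd Diamond_at_1 by (simp_all add: factor_Suc eval_nat_numeral)
  moreover have "int_distinct (factor u 4 0)" "int_distinct (factor u 4 1)"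
    using factor_int_distinct[of 0] factor_int_distinct[of 1] len assms by simp_all
  then have "a \<noteq> b" "a \<noteq> c" "b \<noteq> c" "b \<noteq> d" "c \<noteq> d"
    unfolding F0 F1 by (simp_all add: int_distinct_Cons)
  ultimately show thesis using that by blast
qed

context
  fixes a b c d :: nat
  assumes n: "n = 4"
    and F0: "factor u 4 0 = [Some a, Diamond, Some b, Some c]"
    and F1: "factor u 4 1 = [Diamond, Some b, Some c, Some d]"
    and F2_prefix: "factor u 3 2 = [Some b, Some c, Some d]"
    and distinct: "a \<noteq> b" "a \<noteq> c" "b \<noteq> c" "b \<noteq> d" "c \<noteq> d"
begin

lemma c_extremal: "b < c \<longleftrightarrow> d < c"
proof (rule ccontr)
  assume "\<not> (b < c \<longleftrightarrow> d < c)"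
  with distinct have "b < c \<longleftrightarrow> c < d" by (simp add: not_less order.order_iff_strict)
  then have "\<exists>p \<in> set [[1, 2, 3, 4], [3, 1, 2, 4], [4, 1, 2, 3], [4, 3, 2, 1], [2, 4, 3, 1], [1, 4, 3, 2]].
      covers (factor u 4 0) p \<and> covers (factor u 4 1) p"
    unfolding F0 F1 using distinct by (cases "a < b"; cases "a < c"; cases "b < c"; cases "c < d") auto
  then obtain p where p: "p \<in> set [[1, 2, 3, 4], [3, 1, 2, 4], [4, 1, 2, 3], [4, 3, 2, 1], [2, 4, 3, 1], [1, 4, 3, 2]]"
    "covers (factor u 4 0) p" "covers (factor u 4 1) p" by blast
  from p(1) have "p \<in> perms 4" by (auto simp: perms_def atLeastAtMost_upt)
  with p(2,3) show False using first_factors_disjoint n by simp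
qed

lemma two_avoiding_impossible:
  assumes "p \<in> perms 4" "q \<in> perms 4" "p \<noteq> q"
    "\<not> covers [Some a, Diamond, Some b, Some c] p" "\<not> covers [Diamond, Some b, Some c, Some d] p"
    "covers [Some b, Some c, Some d] (take 3 p)"
    "\<not> covers [Some a, Diamond, Some b, Some c] q" "\<not> covers [Diamond, Some b, Some c, Some d] q"
    "covers [Some b, Some c, Some d] (take 3 q)"
  shows False
  using at_most_one_avoids_first_factors[of p q] assms n F0 F1 F2_prefix by simp

lemma c_not_extremal: "\<not> (b < c \<longleftrightarrow> d < c)"
proof
  assume "b < c \<longleftrightarrow> d < c"
  with distinct consider "b < c" "d < c" "b < d" | "b < c" "d < b" "a < c" | "b < c" "d < b" "c < a"
    | "c < b" "c < d" "d < b" | "c < b" "b < d" "a < c" | "c < b" "b < d" "c < a"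
    by (cases "b < c"; cases "b < d"; cases "a < c") (simp_all add: not_less order.order_iff_strict)
  then show False
  proof cases
    case 1
    show False by (rule two_avoiding_impossible[of "[1, 4, 3, 2]" "[2, 4, 3, 1]"])
      (use 1 distinct in \<open>auto simp: perms_def atLeastAtMost_upt\<close>)
  next
    case 2
    show False by (rule two_avoiding_impossible[of "[3, 4, 1, 2]" "[3, 4, 2, 1]"])
      (use 2 distinct in \<open>auto simp: perms_def atLeastAtMost_upt\<close>)
  next
    case 3
    show False by (rule two_avoiding_impossible[of "[2, 4, 1, 3]" "[3, 4, 2, 1]"])
      (use 3 distinct in \<open>auto simp: perms_def atLeastAtMost_upt\<close>)
  next
    case 4
    show False by (rule two_avoiding_impossible[of "[3, 1, 2, 4]" "[4, 1, 2, 3]"])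
      (use 4 distinct in \<open>auto simp: perms_def atLeastAtMost_upt\<close>)
  next
    case 5
    show False by (rule two_avoiding_impossible[of "[2, 1, 3, 4]" "[3, 1, 4, 2]"])
      (use 5 distinct in \<open>auto simp: perms_def atLeastAtMost_upt\<close>)
  next
    case 6
    show False by (rule two_avoiding_impossible[of "[2, 1, 3, 4]" "[2, 1, 4, 3]"])
      (use 6 distinct in \<open>auto simp: perms_def atLeastAtMost_upt\<close>)
  qed
qed

end

lemma n_ne_4: "n \<noteq> 4"
proof
  assume n: "n = 4"
  then obtain a b c d where
    "factor u 4 0 = [Some a, Diamond, Some b, Some c]"
    "factor u 4 1 = [Diamond, Some b, Some c, Some d]"
    "factor u 3 2 = [Some b, Some c, Some d]"
    "a \<noteq> b" "a \<noteq> c" "b \<noteq> c" "b \<noteq> d" "c \<noteq> d"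
    by (rule first_factors_4)
  with n show False using c_extremal c_not_extremal by blast
qed

end

theorem proposition2:
  fixes n :: nat
  assumes "n \<in> {3, 4}"
  shows "\<not> (\<exists>u. up_word n u \<and> length u \<ge> 2 \<and> u ! 1 = Diamond \<and>
              (\<forall>i < length u. i \<noteq> 1 \<longrightarrow> u ! i \<noteq> Diamond))"
proof
  assume "\<exists>u. up_word n u \<and> length u \<ge> 2 \<and> u ! 1 = Diamond \<and>
              (\<forall>i < length u. i \<noteq> 1 \<longrightarrow> u ! i \<noteq> Diamond)"
  then obtain u where "up_word n u" "u ! 1 = Diamond" "\<forall>i < length u. i \<noteq> 1 \<longrightarrow> u ! i \<noteq> Diamond"
    by blast
  moreover have "2 \<le> n" using assms by auto
  ultimately interpret Diamond_second_letter n u by unfold_locales auto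
  show False using assms n_ne_3 n_ne_4 by auto
qed

end
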